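(* Let $\Omega\subset\mathbb{R}^d$ be a closed $\eta$-prox-regular set for some $\eta>0$. Then the map $\Omega\times\mathbb{R}^d\ni(x,v)\mapsto|P_x(v)|^2$ is lower semicontinuous, and for each fixed $x\in\Omega$ the map $\mathbb{R}^d\ni v\mapsto|P_x(v)|^2$ is convex.
   Context: For closed $S$, $P_S(y)$ is the set of nearest points of $S$ to $y$; the proximal normal cone is $N^P(S,x)=\{v:\exists\alpha>0,\ x\in P_S(x+\alpha v)\}$; $S$ is $\eta$-prox-regular if for every $x\in\partial S$ and $v\in N^P(S,x)$ with $|v|=1$, $B_\eta(x+\eta v)\cap S=\emptyset$ (open ball). The Clarke tangent cone $T(\Omega,x)$ is the set of $v$ such that for all $t_n\searrow0$ and $x_n\in\Omega$ with $x_n\to x$ there exist $v_n\to v$ with $x_n+t_nv_n\in\Omega$; it is a closed convex cone, and $P_x(v)$ denotes the unique nearest point of $T(\Omega,x)$ to $v$. *)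

theory Defs
  imports "HOL-Analysis.Analysis"
begin

definition nearest_points :: "'a::euclidean_space set \<Rightarrow> 'a \<Rightarrow> 'a set" where
  "nearest_points S y = {x \<in> S. \<forall>z \<in> S. dist y x \<le> dist y z}"

definition proximal_normal_cone :: "'a::euclidean_space set \<Rightarrow> 'a \<Rightarrow> 'a set" where
  "proximal_normal_cone S x = {v. \<exists>\<alpha>>0. x \<in> nearest_points S (x + \<alpha> *\<^sub>R v)}"

definition prox_regular :: "real \<Rightarrow> 'a::euclidean_space set \<Rightarrow> bool" where
  "prox_regular \<eta> S \<longleftrightarrow>
     (\<forall>x \<in> frontier S. \<forall>v \<in> proximal_normal_cone S x.
        norm v = 1 \<longrightarrow> ball (x + \<eta> *\<^sub>R v) \<eta> \<inter> S = {})"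

definition clarke_tangent_cone :: "'a::euclidean_space set \<Rightarrow> 'a \<Rightarrow> 'a set" where
  "clarke_tangent_cone \<Omega> x = {v. \<forall>(t::nat \<Rightarrow> real) (xs::nat \<Rightarrow> 'a).
      (\<forall>n. t n > 0) \<and> decseq t \<and> t \<longlonglongrightarrow> 0 \<and>
      (\<forall>n. xs n \<in> \<Omega>) \<and> xs \<longlonglongrightarrow> x \<longrightarrow>
      (\<exists>vs. vs \<longlonglongrightarrow> v \<and> (\<forall>n. xs n + t n *\<^sub>R vs n \<in> \<Omega>))}"

text \<open>P_x(v): the unique nearest point of the Clarke tangent cone T(Omega,x) to v.\<close>
definition tangent_proj :: "'a::euclidean_space set \<Rightarrow> 'a \<Rightarrow> 'a \<Rightarrow> 'a" where
  "tangent_proj \<Omega> x v = (THE p. p \<in> nearest_points (clarke_tangent_cone \<Omega> x) v)"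

definition lsc_on :: "'b::topological_space set \<Rightarrow> ('b \<Rightarrow> real) \<Rightarrow> bool" where
  "lsc_on S f \<longleftrightarrow> (\<forall>z \<in> S. \<forall>a. a < f z \<longrightarrow> (\<forall>\<^sub>F y in at z within S. a < f y))"

end

theory Submission
  imports Defs
begin

text \<open>For an \<open>\<eta>\<close>-prox-regular set every proximal normal \<open>\<zeta>\<close> at \<open>x\<close> satisfies the uniform
  inequality \<open>2 \<eta> \<zeta> \<bullet> (y - x) \<le> \<bar>\<zeta>\<bar> \<bar>y - x\<bar>\<^sup>2\<close> on the whole set. Hence the proximal normal cone
  \<open>N(x)\<close> is a closed convex cone whose graph is closed, and the Clarke tangent cone is exactly its
  polar. By the Moreau decomposition \<open>P\<^sub>x(v) = v - proj\<^bsub>N(x)\<^esub>(v)\<close>, so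
  \<open>\<bar>P\<^sub>x(v)\<bar>\<^sup>2 = dist(v, N(x))\<^sup>2\<close>. This is convex in \<open>v\<close> because \<open>N(x)\<close> is convex, and lower
  semicontinuous in \<open>(x, v)\<close> because the graph of \<open>N\<close> is closed and the projections stay bounded.\<close>

lemma power2_norm_diff:
  fixes a b :: "'a::real_inner"
  shows "(norm (a - b))\<^sup>2 = (norm a)\<^sup>2 - 2 * (a \<bullet> b) + (norm b)\<^sup>2"
  by (simp add: power2_norm_eq_inner inner_diff inner_commute)

lemma frequently_convergent_subseq:
  fixes w :: "nat \<Rightarrow> 'a::euclidean_space"
  assumes "\<exists>\<^sub>F n in sequentially. P n" and "\<And>n. norm (w n) \<le> B"
  obtains r l where "strict_mono r" "\<And>n. P (r n)" "(w \<circ> r) \<longlonglongrightarrow> l"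
proof -
  have "infinite {n. P n}"
    using assms(1) frequently_cofinite cofinite_eq_sequentially by metis
  then obtain r1 :: "nat \<Rightarrow> nat" where r1: "strict_mono r1" "\<And>n. P (r1 n)"
    using infinite_enumerate by blast
  have "\<forall>n. (w \<circ> r1) n \<in> cball 0 B"
    using assms(2) by simp
  with compact_imp_seq_compact[OF compact_cball]
  obtain l r2 where "strict_mono (r2 :: nat \<Rightarrow> nat)" "((w \<circ> r1) \<circ> r2) \<longlonglongrightarrow> l"
    by (rule seq_compactE)
  with r1 show ?thesis
    by (intro that[of "r1 \<circ> r2" l]) (auto simp: strict_mono_o o_assoc)
qed

lemma bounded_seq_tendsto_if_subseq_limits:
  fixes w :: "nat \<Rightarrow> 'a::euclidean_space"
  assumes "\<And>n. norm (w n) \<le> B"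
    and "\<And>r l. strict_mono r \<Longrightarrow> (w \<circ> r) \<longlonglongrightarrow> l \<Longrightarrow> l = c"
  shows "w \<longlonglongrightarrow> c"
proof (rule ccontr)
  assume "\<not> w \<longlonglongrightarrow> c"
  then have "\<exists>\<epsilon>>0. \<exists>\<^sub>F n in sequentially. \<epsilon> \<le> dist (w n) c"
    unfolding tendsto_iff by (simp add: not_eventually not_less)
  then obtain \<epsilon> where "\<epsilon> > 0" and far: "\<exists>\<^sub>F n in sequentially. \<epsilon> \<le> dist (w n) c"
    by blast
  obtain r l where r: "strict_mono r" "\<And>n. \<epsilon> \<le> dist (w (r n)) c" and l: "(w \<circ> r) \<longlonglongrightarrow> l"
    using frequently_convergent_subseq[where w=w, OF far assms(1)] by blast
  have "\<epsilon> \<le> dist l c"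
    using r(2) by (intro LIMSEQ_le_const[OF tendsto_dist[OF l tendsto_const]]) auto
  with \<open>\<epsilon> > 0\<close> assms(2)[OF r(1) l] show False
    by simp
qed

section \<open>Projections onto closed convex sets and cones\<close>

lemma convex_on_dist_closest_point_sq:
  fixes S :: "'a::euclidean_space set"
  assumes "closed S" "convex S" "S \<noteq> {}"
  shows "convex_on UNIV (\<lambda>v. (dist v (closest_point S v))\<^sup>2)"
proof (rule convex_onI)
  fix t :: real and a b :: 'a
  assume t: "0 < t" "t < 1"
  let ?P = "closest_point S"
  define z where "z = (1 - t) *\<^sub>R a + t *\<^sub>R b"
  define A where "A = dist a (?P a)"
  define B where "B = dist b (?P b)"
  have "(1 - t) *\<^sub>R ?P a + t *\<^sub>R ?P b \<in> S"
    using t by (intro convexD[OF assms(2)] closest_point_in_set[OF assms(1,3)]) auto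
  then have "dist z (?P z) \<le> dist z ((1 - t) *\<^sub>R ?P a + t *\<^sub>R ?P b)"
    by (rule closest_point_le[OF assms(1)])
  also have "\<dots> = norm ((1 - t) *\<^sub>R (a - ?P a) + t *\<^sub>R (b - ?P b))"
    by (simp add: z_def dist_norm algebra_simps)
  also have "\<dots> \<le> (1 - t) * A + t * B"
    using t norm_triangle_ineq[of "(1 - t) *\<^sub>R (a - ?P a)" "t *\<^sub>R (b - ?P b)"]
    by (simp add: A_def B_def dist_norm)
  finally have "(dist z (?P z))\<^sup>2 \<le> ((1 - t) * A + t * B)\<^sup>2"
    by (intro power_mono) auto
  also have "\<dots> = (1 - t) * A\<^sup>2 + t * B\<^sup>2 - (1 - t) * t * (A - B)\<^sup>2"
    by (simp add: power2_eq_square algebra_simps)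
  also have "\<dots> \<le> (1 - t) * A\<^sup>2 + t * B\<^sup>2"
    using t by simp
  finally show "(dist z (?P z))\<^sup>2 \<le> (1 - t) * (dist a (?P a))\<^sup>2 + t * (dist b (?P b))\<^sup>2"
    by (simp add: A_def B_def)
qed simp

lemma norm_closest_point_le:
  fixes S :: "'a::euclidean_space set"
  assumes "closed S" "0 \<in> S"
  shows "norm (closest_point S v) \<le> 2 * norm v"
proof -
  have "norm (v - closest_point S v) \<le> norm v"
    using closest_point_le[OF assms] by (simp add: dist_norm)
  then show ?thesis
    using norm_triangle_ineq4[of v "v - closest_point S v"] by simp
qed

lemma closest_point_convex_cone:
  fixes N :: "'a::euclidean_space set"
  assumes "closed N" "convex_cone N"
  shows "closest_point N v \<bullet> (v - closest_point N v) = 0"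
    and "\<And>\<zeta>. \<zeta> \<in> N \<Longrightarrow> (v - closest_point N v) \<bullet> \<zeta> \<le> 0"
proof -
  let ?q = "closest_point N v"
  have "0 \<in> N"
    using assms(2) by (simp add: convex_cone_iff)
  then have qN: "?q \<in> N"
    using closest_point_in_set[OF assms(1)] by blast
  have dot: "(v - ?q) \<bullet> (y - ?q) \<le> 0" if "y \<in> N" for y
    using closest_point_dot[OF _ assms(1) that] assms(2) by (simp add: convex_cone_def)
  have "(v - ?q) \<bullet> (0 - ?q) \<le> 0" "(v - ?q) \<bullet> (2 *\<^sub>R ?q - ?q) \<le> 0"
    using dot[OF \<open>0 \<in> N\<close>] dot[OF convex_cone_scaleR[OF assms(2) _ qN, of 2]] by auto
  then show "?q \<bullet> (v - ?q) = 0"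
    by (simp add: scaleR_2 inner_commute)
  show "(v - ?q) \<bullet> \<zeta> \<le> 0" if "\<zeta> \<in> N" for \<zeta>
    using dot[OF convex_cone_add[OF assms(2) qN that]] by simp
qed

text \<open>Pythagoras for \<open>v - k = q + ((v - q) - k)\<close>, using \<open>q \<bullet> (v - q) = 0\<close> and \<open>k \<bullet> q \<le> 0\<close>.\<close>

lemma dist_polar_cone_ge:
  fixes N :: "'a::euclidean_space set"
  assumes "closed N" "convex_cone N" "\<forall>\<zeta>\<in>N. k \<bullet> \<zeta> \<le> 0"
  shows "(norm (closest_point N v))\<^sup>2 + (norm (v - closest_point N v - k))\<^sup>2 \<le> (dist v k)\<^sup>2"
proof -
  define q where "q = closest_point N v"
  define r where "r = v - q"
  have "q \<in> N"
    unfolding q_def using closest_point_in_set[OF assms(1)] convex_cone_nonempty[OF assms(2)] .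
  have "v - k = q - (k - r)"
    by (simp add: r_def)
  then have "(dist v k)\<^sup>2 = (norm q)\<^sup>2 - 2 * (q \<bullet> (k - r)) + (norm (k - r))\<^sup>2"
    by (simp only: dist_norm power2_norm_diff)
  also have "q \<bullet> (k - r) = k \<bullet> q"
    using closest_point_convex_cone(1)[OF assms(1,2)]
    by (simp add: q_def r_def inner_diff_right inner_commute)
  also have "norm (k - r) = norm (r - k)"
    by (rule norm_minus_commute)
  finally show ?thesis
    using assms(3) \<open>q \<in> N\<close> by (auto simp: q_def r_def)
qed

lemma nearest_points_polar_cone:
  fixes N :: "'a::euclidean_space set"
  assumes "closed N" "convex_cone N"
  shows "nearest_points {k. \<forall>\<zeta>\<in>N. k \<bullet> \<zeta> \<le> 0} v = {v - closest_point N v}"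
proof -
  let ?T = "{k. \<forall>\<zeta>\<in>N. k \<bullet> \<zeta> \<le> 0}"
  let ?r = "v - closest_point N v"
  have rT: "?r \<in> ?T"
    using closest_point_convex_cone(2)[OF assms] by blast
  have dr: "dist v ?r = norm (closest_point N v)"
    by (simp add: dist_norm)
  have "p \<in> nearest_points ?T v \<longleftrightarrow> p = ?r" for p
  proof
    assume "p \<in> nearest_points ?T v"
    then have "\<forall>\<zeta>\<in>N. p \<bullet> \<zeta> \<le> 0" "dist v p \<le> dist v ?r"
      using rT by (auto simp: nearest_points_def)
    moreover from this(2) have "(dist v p)\<^sup>2 \<le> (norm (closest_point N v))\<^sup>2"
      using dr by (simp add: power_mono)
    ultimately have "(norm (?r - p))\<^sup>2 \<le> 0"
      using dist_polar_cone_ge[OF assms, of p v] by linarith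
    then show "p = ?r"
      by simp
  next
    have "dist v ?r \<le> dist v k" if "k \<in> ?T" for k
    proof -
      have "\<forall>\<zeta>\<in>N. k \<bullet> \<zeta> \<le> 0"
        using that by simp
      then have "(norm (closest_point N v))\<^sup>2 \<le> (dist v k)\<^sup>2"
        using dist_polar_cone_ge[OF assms, of k v] zero_le_power2[of "norm (?r - k)"] by linarith
      then show ?thesis
        using dr power2_le_imp_le by simp
    qed
    moreover assume "p = ?r"
    ultimately show "p \<in> nearest_points ?T v"
      using rT by (simp add: nearest_points_def)
  qed
  then show ?thesis
    by blast
qed

lemma lsc_on_cong:
  assumes "\<And>z. z \<in> S \<Longrightarrow> f z = g z"
  shows "lsc_on S f \<longleftrightarrow> lsc_on S g"
  unfolding lsc_on_def eventually_at_topological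
  by (simp add: assms cong: ball_cong imp_cong)

lemma dist_closest_point_sq_le_of_frequently:
  fixes N :: "'a::metric_space \<Rightarrow> 'b::euclidean_space set"
  assumes closed: "\<And>x. x \<in> X \<Longrightarrow> closed (N x)"
    and zero: "\<And>x. x \<in> X \<Longrightarrow> 0 \<in> N x"
    and graph: "\<And>ys y \<zeta>s \<zeta>. (\<And>n. ys n \<in> X) \<Longrightarrow> y \<in> X \<Longrightarrow> ys \<longlonglongrightarrow> y \<Longrightarrow> \<zeta>s \<longlonglongrightarrow> \<zeta> \<Longrightarrow>
        (\<And>n. \<zeta>s n \<in> N (ys n)) \<Longrightarrow> \<zeta> \<in> N y"
    and xs: "\<And>n. xs n \<in> X" "x \<in> X" "xs \<longlonglongrightarrow> x" and vs: "vs \<longlonglongrightarrow> v"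
    and often: "\<exists>\<^sub>F n in sequentially. (dist (vs n) (closest_point (N (xs n)) (vs n)))\<^sup>2 \<le> a"
  shows "(dist v (closest_point (N x) v))\<^sup>2 \<le> a"
proof -
  define Q where "Q n = closest_point (N (xs n)) (vs n)" for n
  obtain K where K: "\<And>n. norm (vs n) \<le> K"
    using convergent_imp_Bseq[OF convergentI[OF vs]] unfolding Bseq_def by blast
  have "norm (Q n) \<le> 2 * K" for n
    using norm_closest_point_le[OF closed[OF xs(1)] zero[OF xs(1)], of n "vs n"] K[of n]
    unfolding Q_def by linarith
  then obtain r l where r: "strict_mono r" "\<And>n. (dist (vs (r n)) (Q (r n)))\<^sup>2 \<le> a"
    and l: "(Q \<circ> r) \<longlonglongrightarrow> l"
    using frequently_convergent_subseq[where w=Q, OF often[folded Q_def]] by blast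
  have "Q n \<in> N (xs n)" for n
    unfolding Q_def using closest_point_in_set[OF closed[OF xs(1)]] zero[OF xs(1)] by blast
  then have "l \<in> N x"
    using xs(1) by (intro graph[OF _ xs(2) LIMSEQ_subseq_LIMSEQ[OF xs(3) r(1)] l]) auto
  then have "(dist v (closest_point (N x) v))\<^sup>2 \<le> (dist v l)\<^sup>2"
    using closest_point_le[OF closed[OF xs(2)]] by (simp add: power_mono)
  also have "(dist v l)\<^sup>2 \<le> a"
  proof (rule LIMSEQ_le_const2)
    show "(\<lambda>n. (dist (vs (r n)) (Q (r n)))\<^sup>2) \<longlonglongrightarrow> (dist v l)\<^sup>2"
      using LIMSEQ_subseq_LIMSEQ[OF vs r(1)] l by (intro tendsto_intros) (simp_all add: o_def)
  qed (use r(2) in blast)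
  finally show ?thesis .
qed

lemma lsc_on_dist_closest_point_sq:
  fixes N :: "'a::metric_space \<Rightarrow> 'b::euclidean_space set"
  assumes closed: "\<And>x. x \<in> X \<Longrightarrow> closed (N x)"
    and zero: "\<And>x. x \<in> X \<Longrightarrow> 0 \<in> N x"
    and graph: "\<And>ys y \<zeta>s \<zeta>. (\<And>n. ys n \<in> X) \<Longrightarrow> y \<in> X \<Longrightarrow> ys \<longlonglongrightarrow> y \<Longrightarrow> \<zeta>s \<longlonglongrightarrow> \<zeta> \<Longrightarrow>
        (\<And>n. \<zeta>s n \<in> N (ys n)) \<Longrightarrow> \<zeta> \<in> N y"
  shows "lsc_on (X \<times> UNIV) (\<lambda>(x, v). (dist v (closest_point (N x) v))\<^sup>2)"
  unfolding lsc_on_def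
proof (intro ballI allI impI)
  let ?f = "\<lambda>(x, v). (dist v (closest_point (N x) v))\<^sup>2"
  fix z a
  assume "z \<in> X \<times> UNIV" and less: "a < ?f z"
  then obtain x v where z: "z = (x, v)" and "x \<in> X"
    by auto
  show "\<forall>\<^sub>F y in at z within X \<times> UNIV. a < ?f y"
  proof (rule sequentially_imp_eventually_within, intro allI impI)
    fix Y :: "nat \<Rightarrow> 'a \<times> 'b"
    assume "(\<forall>n. Y n \<in> X \<times> UNIV \<and> Y n \<noteq> z) \<and> Y \<longlonglongrightarrow> z"
    then have xs: "\<And>n. fst (Y n) \<in> X" and "Y \<longlonglongrightarrow> z"
      by (auto simp: mem_Times_iff)
    have xs_lim: "(\<lambda>n. fst (Y n)) \<longlonglongrightarrow> x" and vs_lim: "(\<lambda>n. snd (Y n)) \<longlonglongrightarrow> v"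
      using tendsto_fst[OF \<open>Y \<longlonglongrightarrow> z\<close>] tendsto_snd[OF \<open>Y \<longlonglongrightarrow> z\<close>] z by simp_all
    show "\<forall>\<^sub>F n in sequentially. a < ?f (Y n)"
    proof (rule ccontr)
      assume "\<not> (\<forall>\<^sub>F n in sequentially. a < ?f (Y n))"
      then have often: "\<exists>\<^sub>F n in sequentially.
          (dist (snd (Y n)) (closest_point (N (fst (Y n))) (snd (Y n))))\<^sup>2 \<le> a"
        by (simp add: not_eventually not_less case_prod_beta)
      have "(dist v (closest_point (N x) v))\<^sup>2 \<le> a"
        by (rule dist_closest_point_sq_le_of_frequently[where X=X and N=N,
              OF _ _ _ xs \<open>x \<in> X\<close> xs_lim vs_lim often]) (fact closed zero graph)+
      with less z show False
        by simp
    qed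
  qed
qed

section \<open>Proximal normal cones\<close>

lemma mem_of_proximal_normal_cone: "\<zeta> \<in> proximal_normal_cone S x \<Longrightarrow> x \<in> S"
  by (auto simp: proximal_normal_cone_def nearest_points_def)

lemma nearest_points_frontier:
  assumes x: "x \<in> nearest_points S y" and "y \<noteq> x"
  shows "x \<in> frontier S"
proof -
  have "x \<in> S" and near: "\<And>z. z \<in> S \<Longrightarrow> dist y x \<le> dist y z"
    using x by (auto simp: nearest_points_def)
  define d where "d = norm (y - x)"
  have "d > 0"
    using \<open>y \<noteq> x\<close> by (simp add: d_def)
  have "x \<notin> interior S"
  proof
    assume "x \<in> interior S"
    then obtain e where "e > 0" "ball x e \<subseteq> S"
      by (meson mem_interior)
    define s where "s = min 1 (e / (2 * d))"
    have s: "0 < s" "s \<le> 1"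
      using \<open>e > 0\<close> \<open>d > 0\<close> by (auto simp: s_def)
    have "s * d \<le> e / (2 * d) * d"
      using \<open>d > 0\<close> by (intro mult_right_mono) (auto simp: s_def)
    also have "\<dots> < e"
      using \<open>e > 0\<close> \<open>d > 0\<close> by simp
    finally have "dist x (x + s *\<^sub>R (y - x)) < e"
      using s by (simp add: d_def dist_norm)
    then have "x + s *\<^sub>R (y - x) \<in> S"
      using \<open>ball x e \<subseteq> S\<close> by auto
    from near[OF this] have "d \<le> norm ((1 - s) *\<^sub>R (y - x))"
      by (simp add: d_def dist_norm algebra_simps)
    also have "\<dots> = (1 - s) * d"
      using s by (simp add: d_def)
    finally have "d * s \<le> 0"
      by (simp add: algebra_simps)
    with mult_pos_pos[OF \<open>d > 0\<close> s(1)] show False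
      by linarith
  qed
  then show ?thesis
    using \<open>x \<in> S\<close> closure_subset by (auto simp: frontier_def)
qed

lemma nearest_points_shift_iff:
  assumes "x \<in> S"
  shows "x \<in> nearest_points S (x + \<alpha> *\<^sub>R \<zeta>) \<longleftrightarrow>
           (\<forall>y\<in>S. 2 * \<alpha> * (\<zeta> \<bullet> (y - x)) \<le> (norm (y - x))\<^sup>2)"
proof -
  have "dist (x + \<alpha> *\<^sub>R \<zeta>) x \<le> dist (x + \<alpha> *\<^sub>R \<zeta>) y \<longleftrightarrow>
          2 * \<alpha> * (\<zeta> \<bullet> (y - x)) \<le> (norm (y - x))\<^sup>2" for y
  proof -
    have "dist (x + \<alpha> *\<^sub>R \<zeta>) y = norm ((y - x) - \<alpha> *\<^sub>R \<zeta>)"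
      by (simp add: dist_norm norm_minus_commute algebra_simps)
    then have "(dist (x + \<alpha> *\<^sub>R \<zeta>) y)\<^sup>2
        = (norm (y - x))\<^sup>2 - 2 * \<alpha> * (\<zeta> \<bullet> (y - x)) + (dist (x + \<alpha> *\<^sub>R \<zeta>) x)\<^sup>2"
      by (simp add: power2_norm_diff power_mult_distrib inner_commute dist_norm)
    moreover have "dist (x + \<alpha> *\<^sub>R \<zeta>) x \<le> dist (x + \<alpha> *\<^sub>R \<zeta>) y \<longleftrightarrow>
        (dist (x + \<alpha> *\<^sub>R \<zeta>) x)\<^sup>2 \<le> (dist (x + \<alpha> *\<^sub>R \<zeta>) y)\<^sup>2"
      by (simp add: power2_le_iff_abs_le)
    ultimately show ?thesis
      by linarith
  qed
  then show ?thesis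
    using assms by (auto simp: nearest_points_def)
qed

lemma proximal_normal_cone_iff:
  assumes "x \<in> S"
  shows "\<zeta> \<in> proximal_normal_cone S x \<longleftrightarrow>
           (\<exists>\<sigma>. \<forall>y\<in>S. \<zeta> \<bullet> (y - x) \<le> \<sigma> * (norm (y - x))\<^sup>2)"
proof
  assume "\<zeta> \<in> proximal_normal_cone S x"
  then obtain \<alpha> where "\<alpha> > 0" "\<forall>y\<in>S. 2 * \<alpha> * (\<zeta> \<bullet> (y - x)) \<le> (norm (y - x))\<^sup>2"
    using nearest_points_shift_iff[OF assms] by (auto simp: proximal_normal_cone_def)
  then have "\<forall>y\<in>S. \<zeta> \<bullet> (y - x) \<le> 1 / (2 * \<alpha>) * (norm (y - x))\<^sup>2"
    by (auto simp: field_simps)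
  then show "\<exists>\<sigma>. \<forall>y\<in>S. \<zeta> \<bullet> (y - x) \<le> \<sigma> * (norm (y - x))\<^sup>2" ..
next
  assume "\<exists>\<sigma>. \<forall>y\<in>S. \<zeta> \<bullet> (y - x) \<le> \<sigma> * (norm (y - x))\<^sup>2"
  then obtain \<sigma> where \<sigma>: "\<forall>y\<in>S. \<zeta> \<bullet> (y - x) \<le> \<sigma> * (norm (y - x))\<^sup>2" ..
  define \<tau> where "\<tau> = max \<sigma> 1"
  have "\<zeta> \<bullet> (y - x) \<le> \<tau> * (norm (y - x))\<^sup>2" if "y \<in> S" for y
    using \<sigma> that mult_right_mono[of \<sigma> \<tau> "(norm (y - x))\<^sup>2"] by (force simp: \<tau>_def)
  then have "x \<in> nearest_points S (x + (1 / (2 * \<tau>)) *\<^sub>R \<zeta>)"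
    unfolding nearest_points_shift_iff[OF assms] by (auto simp: \<tau>_def field_simps)
  moreover have "1 / (2 * \<tau>) > 0"
    by (simp add: \<tau>_def)
  ultimately show "\<zeta> \<in> proximal_normal_cone S x"
    unfolding proximal_normal_cone_def by blast
qed

lemma convex_cone_proximal_normal_cone:
  assumes "x \<in> S"
  shows "convex_cone (proximal_normal_cone S x)"
proof -
  let ?bound = "\<lambda>\<zeta> \<sigma>. \<forall>y\<in>S. \<zeta> \<bullet> (y - x) \<le> \<sigma> * (norm (y - x))\<^sup>2"
  have add: "?bound (\<zeta>1 + \<zeta>2) (\<sigma>1 + \<sigma>2)" if "?bound \<zeta>1 \<sigma>1" "?bound \<zeta>2 \<sigma>2" for \<zeta>1 \<zeta>2 \<sigma>1 \<sigma>2
    using that by (simp add: inner_add_left distrib_right add_mono)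
  have scale: "?bound (c *\<^sub>R \<zeta>) (c * \<sigma>)" if "?bound \<zeta> \<sigma>" "c \<ge> 0" for \<zeta> \<sigma> c
    using that by (simp add: mult_left_mono mult.assoc)
  show ?thesis
    unfolding convex_cone_iff
  proof (intro conjI ballI allI impI)
    show "0 \<in> proximal_normal_cone S x"
      unfolding proximal_normal_cone_iff[OF assms] by (intro exI[of _ 0]) simp
  next
    fix \<zeta>1 \<zeta>2
    assume "\<zeta>1 \<in> proximal_normal_cone S x" "\<zeta>2 \<in> proximal_normal_cone S x"
    then show "\<zeta>1 + \<zeta>2 \<in> proximal_normal_cone S x"
      unfolding proximal_normal_cone_iff[OF assms] using add by blast
  next
    fix \<zeta> and c :: real
    assume "\<zeta> \<in> proximal_normal_cone S x" "c \<ge> 0"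
    then show "c *\<^sub>R \<zeta> \<in> proximal_normal_cone S x"
      unfolding proximal_normal_cone_iff[OF assms] using scale by blast
  qed
qed

lemma nearest_points_proximal_normal:
  "p \<in> nearest_points S z \<Longrightarrow> z - p \<in> proximal_normal_cone S p"
  unfolding proximal_normal_cone_def by (intro CollectI exI[of _ 1]) simp

lemma clarke_tangent_cone_polar:
  assumes "x \<in> S" "k \<in> clarke_tangent_cone S x" "\<zeta> \<in> proximal_normal_cone S x"
  shows "k \<bullet> \<zeta> \<le> 0"
proof -
  obtain \<sigma> where \<sigma>: "\<And>y. y \<in> S \<Longrightarrow> \<zeta> \<bullet> (y - x) \<le> \<sigma> * (norm (y - x))\<^sup>2"
    using assms(3) proximal_normal_cone_iff[OF assms(1)] by blast
  define t :: "nat \<Rightarrow> real" where "t n = inverse (real (Suc n))" for n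
  have t_pos: "t n > 0" for n
    by (simp add: t_def)
  have "decseq t"
    unfolding t_def by (rule decseq_SucI) (simp add: field_simps)
  moreover have "t \<longlonglongrightarrow> 0"
    unfolding t_def by (rule LIMSEQ_inverse_real_of_nat)
  ultimately have "\<exists>vs. vs \<longlonglongrightarrow> k \<and> (\<forall>n. x + t n *\<^sub>R vs n \<in> S)"
    using assms(1,2) t_pos unfolding clarke_tangent_cone_def mem_Collect_eq
    by (elim allE[of _ t] allE[of _ "\<lambda>n. x"]) auto
  then obtain vs where vs: "vs \<longlonglongrightarrow> k" "\<And>n. x + t n *\<^sub>R vs n \<in> S"
    by blast
  have "\<zeta> \<bullet> vs n \<le> \<sigma> * t n * (norm (vs n))\<^sup>2" for n
  proof -
    have "\<zeta> \<bullet> (t n *\<^sub>R vs n) \<le> \<sigma> * (norm (t n *\<^sub>R vs n))\<^sup>2"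
      using \<sigma>[OF vs(2)[of n]] by simp
    then have "t n * (\<zeta> \<bullet> vs n) \<le> t n * (\<sigma> * t n * (norm (vs n))\<^sup>2)"
      using t_pos[of n] by (simp add: power2_eq_square algebra_simps)
    then show ?thesis
      using t_pos[of n] by simp
  qed
  moreover have "(\<lambda>n. \<zeta> \<bullet> vs n) \<longlonglongrightarrow> \<zeta> \<bullet> k"
    using vs(1) by (intro tendsto_intros)
  moreover have "(\<lambda>n. \<sigma> * t n * (norm (vs n))\<^sup>2) \<longlonglongrightarrow> \<sigma> * 0 * (norm k)\<^sup>2"
    using vs(1) \<open>t \<longlonglongrightarrow> 0\<close> by (intro tendsto_intros)
  ultimately have "\<zeta> \<bullet> k \<le> \<sigma> * 0 * (norm k)\<^sup>2"
    by (intro LIMSEQ_le) auto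
  then show ?thesis
    by (simp add: inner_commute)
qed

section \<open>Prox-regular sets\<close>

lemma prox_regular_proximal_normal_ineq:
  assumes "prox_regular \<eta> S" "\<eta> > 0" "\<zeta> \<in> proximal_normal_cone S x" "y \<in> S"
  shows "2 * \<eta> * (\<zeta> \<bullet> (y - x)) \<le> norm \<zeta> * (norm (y - x))\<^sup>2"
proof (cases "\<zeta> = 0")
  case True
  then show ?thesis
    by simp
next
  case False
  have "x \<in> S"
    using assms(3) by (rule mem_of_proximal_normal_cone)
  obtain \<alpha> where "\<alpha> > 0" "x \<in> nearest_points S (x + \<alpha> *\<^sub>R \<zeta>)"
    using assms(3) by (auto simp: proximal_normal_cone_def)
  then have "x \<in> frontier S"
    using False by (intro nearest_points_frontier) auto
  define u where "u = (1 / norm \<zeta>) *\<^sub>R \<zeta>"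
  have "norm u = 1"
    using False by (simp add: u_def)
  have "u \<in> proximal_normal_cone S x"
    unfolding u_def using assms(3) convex_cone_proximal_normal_cone[OF \<open>x \<in> S\<close>]
    by (simp add: convex_cone_scaleR)
  then have ball: "ball (x + \<eta> *\<^sub>R u) \<eta> \<inter> S = {}"
    using assms(1) \<open>x \<in> frontier S\<close> \<open>norm u = 1\<close> unfolding prox_regular_def by blast
  have "dist (x + \<eta> *\<^sub>R u) x \<le> dist (x + \<eta> *\<^sub>R u) z" if "z \<in> S" for z
  proof -
    have "dist (x + \<eta> *\<^sub>R u) x = \<eta>"
      using \<open>norm u = 1\<close> \<open>\<eta> > 0\<close> by (simp add: dist_norm)
    moreover have "z \<notin> ball (x + \<eta> *\<^sub>R u) \<eta>"
      using ball that by blast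
    ultimately show ?thesis
      by simp
  qed
  then have "x \<in> nearest_points S (x + \<eta> *\<^sub>R u)"
    using \<open>x \<in> S\<close> by (simp add: nearest_points_def)
  then have "2 * \<eta> * (u \<bullet> (y - x)) \<le> (norm (y - x))\<^sup>2"
    using nearest_points_shift_iff[OF \<open>x \<in> S\<close>] assms(4) by blast
  then have "norm \<zeta> * (2 * \<eta> * (u \<bullet> (y - x))) \<le> norm \<zeta> * (norm (y - x))\<^sup>2"
    by (simp add: mult_left_mono)
  moreover have "norm \<zeta> * (2 * \<eta> * (u \<bullet> (y - x))) = 2 * \<eta> * (\<zeta> \<bullet> (y - x))"
    using False by (simp add: u_def)
  ultimately show ?thesis
    by simp
qed

lemma prox_regular_proximal_normal_limit:
  assumes "prox_regular \<eta> S" "\<eta> > 0" "closed S"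
    and "xs \<longlonglongrightarrow> x" "\<zeta>s \<longlonglongrightarrow> \<zeta>" "\<And>n. \<zeta>s n \<in> proximal_normal_cone S (xs n)"
  shows "\<zeta> \<in> proximal_normal_cone S x"
proof -
  have "x \<in> S"
    using closed_sequentially[OF assms(3) _ assms(4)] mem_of_proximal_normal_cone[OF assms(6)] by blast
  have "2 * \<eta> * (\<zeta> \<bullet> (y - x)) \<le> norm \<zeta> * (norm (y - x))\<^sup>2" if "y \<in> S" for y
  proof (rule LIMSEQ_le)
    show "(\<lambda>n. 2 * \<eta> * (\<zeta>s n \<bullet> (y - xs n))) \<longlonglongrightarrow> 2 * \<eta> * (\<zeta> \<bullet> (y - x))"
      using assms(4,5) by (intro tendsto_intros)
    show "(\<lambda>n. norm (\<zeta>s n) * (norm (y - xs n))\<^sup>2) \<longlonglongrightarrow> norm \<zeta> * (norm (y - x))\<^sup>2"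
      using assms(4,5) by (intro tendsto_intros)
    show "\<exists>N. \<forall>n\<ge>N. 2 * \<eta> * (\<zeta>s n \<bullet> (y - xs n)) \<le> norm (\<zeta>s n) * (norm (y - xs n))\<^sup>2"
      using prox_regular_proximal_normal_ineq[OF assms(1,2) assms(6) that] by blast
  qed
  then have "\<forall>y\<in>S. \<zeta> \<bullet> (y - x) \<le> norm \<zeta> / (2 * \<eta>) * (norm (y - x))\<^sup>2"
    using \<open>\<eta> > 0\<close> by (simp add: field_simps)
  then show ?thesis
    using proximal_normal_cone_iff[OF \<open>x \<in> S\<close>] by blast
qed

lemma closed_proximal_normal_cone:
  assumes "prox_regular \<eta> S" "\<eta> > 0" "closed S"
  shows "closed (proximal_normal_cone S x)"
  unfolding closed_sequential_limits
  using prox_regular_proximal_normal_limit[OF assms tendsto_const] by blast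

lemma prox_regular_projection_step:
  assumes "prox_regular \<eta> S" "\<eta> > 0" "y \<in> S" "t > 0" "p \<in> nearest_points S (y + t *\<^sub>R k)"
  defines "w \<equiv> (1 / t) *\<^sub>R (y + t *\<^sub>R k - p)"
  shows "w \<in> proximal_normal_cone S p"
    and "norm w \<le> norm k"
    and "norm (y - p) \<le> 2 * t * norm k"
    and "\<eta> * ((norm w)\<^sup>2 - w \<bullet> k) \<le> 2 * t * norm w * (norm k)\<^sup>2"
proof -
  have "p \<in> S"
    using assms(5) by (simp add: nearest_points_def)
  have tw: "y + t *\<^sub>R k - p = t *\<^sub>R w"
    using \<open>t > 0\<close> by (simp add: w_def)
  have zN: "y + t *\<^sub>R k - p \<in> proximal_normal_cone S p"
    using assms(5) by (rule nearest_points_proximal_normal)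
  then show "w \<in> proximal_normal_cone S p"
    unfolding w_def using \<open>t > 0\<close> convex_cone_proximal_normal_cone[OF \<open>p \<in> S\<close>]
    by (simp add: convex_cone_scaleR)
  have "dist (y + t *\<^sub>R k) p \<le> dist (y + t *\<^sub>R k) y"
    using assms(5) \<open>y \<in> S\<close> by (simp add: nearest_points_def)
  then have tw_le: "t * norm w \<le> t * norm k"
    using \<open>t > 0\<close> tw by (simp add: dist_norm)
  then show "norm w \<le> norm k"
    using \<open>t > 0\<close> by simp
  have yp: "y - p = t *\<^sub>R (w - k)"
    using tw by (simp add: algebra_simps)
  have "norm (y - p) \<le> t * norm w + t * norm k"
    unfolding yp using \<open>t > 0\<close> norm_triangle_ineq4[of w k] by (simp add: distrib_left[symmetric])
  with tw_le show yp_le: "norm (y - p) \<le> 2 * t * norm k"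
    by simp
  have "2 * \<eta> * ((t *\<^sub>R w) \<bullet> (y - p)) \<le> norm (t *\<^sub>R w) * (norm (y - p))\<^sup>2"
    using prox_regular_proximal_normal_ineq[OF assms(1,2) zN \<open>y \<in> S\<close>] unfolding tw .
  also have "\<dots> \<le> norm (t *\<^sub>R w) * (2 * t * norm k)\<^sup>2"
    using yp_le by (intro mult_left_mono power_mono) auto
  finally have "t\<^sup>2 * (2 * (\<eta> * ((norm w)\<^sup>2 - w \<bullet> k))) \<le> t\<^sup>2 * (2 * (2 * t * norm w * (norm k)\<^sup>2))"
    unfolding yp using \<open>t > 0\<close>
    by (simp add: dot_square_norm power2_eq_square algebra_simps)
  then show "\<eta> * ((norm w)\<^sup>2 - w \<bullet> k) \<le> 2 * t * norm w * (norm k)\<^sup>2"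
    using \<open>t > 0\<close> by simp
qed

lemma prox_regular_polar_cluster_point:
  assumes "prox_regular \<eta> S" "\<eta> > 0" "closed S"
    and polar: "\<forall>\<zeta>\<in>proximal_normal_cone S x. k \<bullet> \<zeta> \<le> 0"
    and "ps \<longlonglongrightarrow> x" "ws \<longlonglongrightarrow> l" "ts \<longlonglongrightarrow> 0"
    and "\<And>n. ws n \<in> proximal_normal_cone S (ps n)"
    and "\<And>n. \<eta> * ((norm (ws n))\<^sup>2 - ws n \<bullet> k) \<le> 2 * ts n * norm (ws n) * (norm k)\<^sup>2"
  shows "l = 0"
proof -
  have "l \<in> proximal_normal_cone S x"
    using prox_regular_proximal_normal_limit[OF assms(1-3,5,6,8)] .
  with polar have "k \<bullet> l \<le> 0"
    by blast
  have "\<eta> * ((norm l)\<^sup>2 - l \<bullet> k) \<le> 2 * 0 * norm l * (norm k)\<^sup>2"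
  proof (rule LIMSEQ_le)
    show "(\<lambda>n. \<eta> * ((norm (ws n))\<^sup>2 - ws n \<bullet> k)) \<longlonglongrightarrow> \<eta> * ((norm l)\<^sup>2 - l \<bullet> k)"
      using assms(6) by (intro tendsto_intros)
    show "(\<lambda>n. 2 * ts n * norm (ws n) * (norm k)\<^sup>2) \<longlonglongrightarrow> 2 * 0 * norm l * (norm k)\<^sup>2"
      using assms(6,7) by (intro tendsto_intros)
  qed (use assms(9) in auto)
  with \<open>\<eta> > 0\<close> have "(norm l)\<^sup>2 \<le> k \<bullet> l"
    by (simp add: inner_commute mult_le_0_iff)
  with \<open>k \<bullet> l \<le> 0\<close> have "(norm l)\<^sup>2 \<le> 0"
    by linarith
  then show "l = 0"
    by simp
qed

text \<open>Project \<open>xs n + t n k\<close> back onto \<open>S\<close>: the rescaled corrections \<open>w n\<close> tend to \<open>0\<close>, so the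
  directions \<open>k - w n\<close> witness \<open>k \<in> T(S, x)\<close>.\<close>

lemma prox_regular_polar_subset_clarke_tangent_cone:
  assumes "prox_regular \<eta> S" "\<eta> > 0" "closed S" "x \<in> S"
    and polar: "\<forall>\<zeta>\<in>proximal_normal_cone S x. k \<bullet> \<zeta> \<le> 0"
  shows "k \<in> clarke_tangent_cone S x"
  unfolding clarke_tangent_cone_def
proof (intro CollectI allI impI)
  fix t :: "nat \<Rightarrow> real" and xs :: "nat \<Rightarrow> 'a"
  assume "(\<forall>n. 0 < t n) \<and> decseq t \<and> t \<longlonglongrightarrow> 0 \<and> (\<forall>n. xs n \<in> S) \<and> xs \<longlonglongrightarrow> x"
  then have t: "\<And>n. t n > 0" "t \<longlonglongrightarrow> 0" and xs: "\<And>n. xs n \<in> S" "xs \<longlonglongrightarrow> x"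
    by auto
  define p where "p n = closest_point S (xs n + t n *\<^sub>R k)" for n
  have p: "p n \<in> nearest_points S (xs n + t n *\<^sub>R k)" for n
    using closest_point_exists[OF assms(3)] assms(4) by (auto simp: p_def nearest_points_def)
  define w where "w n = (1 / t n) *\<^sub>R (xs n + t n *\<^sub>R k - p n)" for n
  note step = prox_regular_projection_step[OF assms(1,2) xs(1) t(1) p, folded w_def]
  have "(\<lambda>n. xs n - p n) \<longlonglongrightarrow> 0"
  proof (rule tendsto_norm_zero_cancel, rule real_tendsto_sandwich[where f="\<lambda>n. 0"])
    show "(\<lambda>n. 2 * t n * norm k) \<longlonglongrightarrow> 0"
      by (intro tendsto_mult_left_zero tendsto_mult_right_zero t(2))
  qed (use step(3) in auto)
  from tendsto_diff[OF xs(2) this] have p_lim: "p \<longlonglongrightarrow> x"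
    by simp
  have "w \<longlonglongrightarrow> 0"
  proof (rule bounded_seq_tendsto_if_subseq_limits[OF step(2)])
    fix r l
    assume r: "strict_mono r" and "(w \<circ> r) \<longlonglongrightarrow> l"
    then show "l = 0"
      using step(1,4) by (intro prox_regular_polar_cluster_point[OF assms(1-3) polar
          LIMSEQ_subseq_LIMSEQ[OF p_lim r] _ LIMSEQ_subseq_LIMSEQ[OF t(2) r]]) auto
  qed
  show "\<exists>vs. vs \<longlonglongrightarrow> k \<and> (\<forall>n. xs n + t n *\<^sub>R vs n \<in> S)"
  proof (intro exI conjI allI)
    show "(\<lambda>n. k - w n) \<longlonglongrightarrow> k"
      using tendsto_diff[OF tendsto_const \<open>w \<longlonglongrightarrow> 0\<close>, of k] by simp
    fix n
    have "xs n + t n *\<^sub>R (k - w n) = p n"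
      using t(1)[of n] by (simp add: w_def algebra_simps)
    then show "xs n + t n *\<^sub>R (k - w n) \<in> S"
      using p[of n] by (simp add: nearest_points_def)
  qed
qed

lemma prox_regular_clarke_tangent_cone_eq_polar:
  assumes "prox_regular \<eta> S" "\<eta> > 0" "closed S" "x \<in> S"
  shows "clarke_tangent_cone S x = {k. \<forall>\<zeta>\<in>proximal_normal_cone S x. k \<bullet> \<zeta> \<le> 0}"
  using clarke_tangent_cone_polar[OF assms(4)] prox_regular_polar_subset_clarke_tangent_cone[OF assms]
  by auto

lemma prox_regular_tangent_proj:
  assumes "prox_regular \<eta> S" "\<eta> > 0" "closed S" "x \<in> S"
  shows "tangent_proj S x v = v - closest_point (proximal_normal_cone S x) v"
  unfolding tangent_proj_def prox_regular_clarke_tangent_cone_eq_polar[OF assms]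
    nearest_points_polar_cone[OF closed_proximal_normal_cone[OF assms(1-3)]
      convex_cone_proximal_normal_cone[OF assms(4)]]
  by simp

theorem proposition2p2:
  fixes \<Omega> :: "'a::euclidean_space set" and \<eta> :: real
  assumes "closed \<Omega>" and "\<eta> > 0" and "prox_regular \<eta> \<Omega>"
  shows "lsc_on (\<Omega> \<times> UNIV) (\<lambda>(x, v). (norm (tangent_proj \<Omega> x v))\<^sup>2)
         \<and> (\<forall>x \<in> \<Omega>. convex_on UNIV (\<lambda>v. (norm (tangent_proj \<Omega> x v))\<^sup>2))"
proof -
  let ?N = "proximal_normal_cone \<Omega>"
  have closed_N: "closed (?N x)" for x
    using closed_proximal_normal_cone[OF assms(3,2,1)] .
  have cone_N: "convex_cone (?N x)" if "x \<in> \<Omega>" for x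
    using convex_cone_proximal_normal_cone[OF that] .
  have proj: "(norm (tangent_proj \<Omega> x v))\<^sup>2 = (dist v (closest_point (?N x) v))\<^sup>2" if "x \<in> \<Omega>" for x v
    using prox_regular_tangent_proj[OF assms(3,2,1) that] by (simp add: dist_norm)
  have "lsc_on (\<Omega> \<times> UNIV) (\<lambda>(x, v). (dist v (closest_point (?N x) v))\<^sup>2)"
  proof (rule lsc_on_dist_closest_point_sq)
    show "0 \<in> ?N x" if "x \<in> \<Omega>" for x
      using cone_N[OF that] by (simp add: convex_cone_iff)
  qed (use closed_N prox_regular_proximal_normal_limit[OF assms(3,2,1)] in auto)
  moreover have "lsc_on (\<Omega> \<times> UNIV) (\<lambda>(x, v). (norm (tangent_proj \<Omega> x v))\<^sup>2) \<longleftrightarrow>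
      lsc_on (\<Omega> \<times> UNIV) (\<lambda>(x, v). (dist v (closest_point (?N x) v))\<^sup>2)"
    by (rule lsc_on_cong) (clarsimp simp: proj)
  moreover have "convex_on UNIV (\<lambda>v. (norm (tangent_proj \<Omega> x v))\<^sup>2)" if "x \<in> \<Omega>" for x
    using convex_on_dist_closest_point_sq[OF closed_N] cone_N[OF that] proj[OF that]
    by (simp add: convex_cone_def)
  ultimately show ?thesis
    by blast
qed

end
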